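(* Let $\lambda\neq0$. For every positive integer $N$ and every integer $k\ge 0$, $$Bl_{k+N}(\lambda)=(-1)^N\lambda\sum_{i=1}^{N+1}a_{i-1}(N;\lambda)\sum_{l=0}^{k}\binom{k}{l}(-1)^l(N+l-1)_l\,Bl^{(i)}_{k-l}(\lambda).$$
   Context: $(x)_n=x(x-1)\cdots(x-n+1)$, $(x)_0=1$. The Boole numbers $Bl_n(\lambda)$ and higher-order Boole numbers $Bl_n^{(r)}(\lambda)$ ($r\in\mathbb{N}$) are defined by $\frac{1}{(1+t)^\lambda+1}=\sum_{n\ge0}Bl_n(\lambda)\frac{t^n}{n!}$ and $\left(\frac{1}{(1+t)^\lambda+1}\right)^r=\sum_{n\ge0}Bl_n^{(r)}(\lambda)\frac{t^n}{n!}$. The numbers $a_i(N;\lambda)$ are defined recursively by $a_0(0;\lambda)=1/\lambda$ and, for $N\ge0$: $a_0(N+1;\lambda)=(N+\lambda)a_0(N;\lambda)$, $a_{N+1}(N+1;\lambda)=-(N+1)\lambda a_N(N;\lambda)$, $a_k(N+1;\lambda)=-k\lambda a_{k-1}(N;\lambda)+(N+(k+1)\lambda)a_k(N;\lambda)$ for $1\le k\le N$; they are the coefficients for which $\left(\frac{d}{dt}\right)^N F=\frac{(-1)^N\lambda}{(1+t)^N}\sum_{i=1}^{N+1}a_{i-1}(N;\lambda)F^i$ with $F=\frac{1}{(1+t)^\lambda+1}$. *)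

theory Defs
  imports "HOL-Computational_Algebra.Formal_Power_Series"
begin

definition falling :: "'a::comm_ring_1 \<Rightarrow> nat \<Rightarrow> 'a" where
  "falling x n = (\<Prod>j<n. x - of_nat j)"

definition boole_fps :: "'a::field_char_0 \<Rightarrow> 'a fps" where
  "boole_fps lam = inverse (fps_binomial lam + 1)"

definition boole_high :: "nat \<Rightarrow> nat \<Rightarrow> 'a::field_char_0 \<Rightarrow> 'a" where
  "boole_high r n lam = fact n * fps_nth (boole_fps lam ^ r) n"

definition boole :: "nat \<Rightarrow> 'a::field_char_0 \<Rightarrow> 'a" where
  "boole n lam = fact n * fps_nth (boole_fps lam) n"

text \<open>The coefficients a_k(N;lambda); acoef k N lam = a_k(N;lambda), meaningful for k \<le> N
  (set to 0 for k > N).\<close>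
fun acoef :: "nat \<Rightarrow> nat \<Rightarrow> 'a::field_char_0 \<Rightarrow> 'a" where
  "acoef k 0 lam = (if k = 0 then 1 / lam else 0)"
| "acoef k (Suc N) lam =
     (if k = 0 then (of_nat N + lam) * acoef 0 N lam
      else if k = Suc N then - (of_nat (Suc N) * lam) * acoef N N lam
      else if k \<le> N then - (of_nat k * lam) * acoef (k - 1) N lam
                         + (of_nat N + of_nat (k + 1) * lam) * acoef k N lam
      else 0)"

end

theory Submission
  imports Defs
begin

text \<open>
  The series F = 1/((1+t)^\<lambda> + 1) satisfies the Riccati equation (1+t) F' = \<lambda> (F^2 - F),
  so the Euler operator (1+t) d/dt maps F^(i+1) to \<lambda> (i+1) (F^(i+2) - F^(i+1)).
  Differentiating (1+t)^N F^(N) = (-1)^N \<lambda> \<Sum>_i a_{i-1}(N) F^i once more shows that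
  the coefficients obey exactly the recurrence defining a_k(N+1). Then Bl_{k+N} / k! is the
  k-th coefficient of F^(N) = (1+t)^(-N) (-1)^N \<lambda> \<Sum>_i a_{i-1}(N) F^i, and expanding
  (1+t)^(-N) as a binomial series in the Cauchy product gives the formula.
\<close>

lemma acoef_eq_0: "N < k \<Longrightarrow> acoef k N lam = 0"
  by (induction N arbitrary: k) auto

lemma acoef_Suc:
  fixes lam :: "'a::field_char_0"
  shows "acoef k (Suc N) lam =
     - (of_nat k * lam) * acoef (k - 1) N lam + (of_nat N + of_nat (k + 1) * lam) * acoef k N lam"
  by (auto simp: acoef_eq_0)

lemma fps_deriv_one_plus_X_power:
  "(1 + fps_X) * fps_deriv ((1 + fps_X :: 'a::comm_ring_1 fps) ^ N) = of_nat N * (1 + fps_X) ^ N"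
proof (cases N)
  case (Suc m)
  then show ?thesis
    by (simp only: fps_deriv_power' diff_Suc_1) (simp add: mult_ac del: of_nat_Suc)
qed simp

lemma fps_nth_funpow_deriv:
  fixes f :: "'a::{comm_semiring_1, semiring_char_0} fps"
  shows "fact k * fps_nth ((fps_deriv ^^ N) f) k = fact (k + N) * fps_nth f (k + N)"
proof (induction N arbitrary: k)
  case (Suc N)
  have "fact k * fps_nth ((fps_deriv ^^ Suc N) f) k
      = fact (Suc k) * fps_nth ((fps_deriv ^^ N) f) (Suc k)"
    by (simp add: algebra_simps)
  also have "\<dots> = fact (k + Suc N) * fps_nth f (k + Suc N)"
    using Suc.IH[of "Suc k"] by simp
  finally show ?case .
qed simp

lemma fps_nth_binomial_minus_of_nat:
  "fps_nth (fps_binomial (- of_nat N :: 'a::field_char_0)) l =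
     (-1) ^ l * falling (of_nat N + of_nat l - 1) l / fact l"
  unfolding fps_binomial_nth gbinomial_minus
  unfolding gbinomial_prod_rev falling_def atLeast0LessThan by simp

lemma fact_nth_binomial_minus_of_nat_mult:
  fixes G :: "'a::field_char_0 fps"
  shows "fact k * fps_nth (fps_binomial (- of_nat N) * G) k =
    (\<Sum>l=0..k. of_nat (k choose l) * (-1) ^ l * falling (of_nat N + of_nat l - 1) l *
                (fact (k - l) * fps_nth G (k - l)))"
  unfolding fps_mult_nth sum_distrib_left
proof (rule sum.cong[OF refl])
  fix l assume "l \<in> {0..k}"
  then have "(fact k :: 'a) = fact l * fact (k - l) * of_nat (k choose l)"
    using binomial_fact_lemma[of l k] by (metis atLeastAtMost_iff of_nat_fact of_nat_mult)
  then show "fact k * (fps_nth (fps_binomial (- of_nat N)) l * fps_nth G (k - l)) =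
    of_nat (k choose l) * (-1) ^ l * falling (of_nat N + of_nat l - 1) l *
      (fact (k - l) * fps_nth G (k - l))"
    unfolding fps_nth_binomial_minus_of_nat by (simp add: field_simps)
qed

lemma boole_fps_riccati:
  fixes lam :: "'a::field_char_0"
  defines "F \<equiv> boole_fps lam"
  shows "(1 + fps_X) * fps_deriv F = fps_const lam * (F^2 - F)"
proof -
  define B where "B = fps_binomial lam"
  have B0: "fps_nth (B + 1) 0 \<noteq> 0" by (simp add: B_def)
  have F: "F = inverse (B + 1)" by (simp add: F_def B_def boole_fps_def)
  have BF: "B * F = 1 - F"
    using inverse_mult_eq_1'[OF B0] F by (simp add: algebra_simps)
  have X0: "fps_nth (1 + fps_X :: 'a fps) 0 \<noteq> 0" by simp
  have dB: "(1 + fps_X) * fps_deriv B = fps_const lam * B"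
    unfolding B_def fps_binomial_deriv fps_divide_unit[OF X0]
    using inverse_mult_eq_1'[OF X0] by (simp add: algebra_simps)
  have "(1 + fps_X) * fps_deriv F = - ((1 + fps_X) * fps_deriv B) * F * F"
    using fps_inverse_deriv[OF B0] F by (simp add: power2_eq_square mult.assoc)
  also have "\<dots> = - fps_const lam * (B * F) * F"
    by (simp only: dB mult.assoc minus_mult_left)
  also have "\<dots> = fps_const lam * (F^2 - F)"
    unfolding BF by (simp add: power2_eq_square algebra_simps del: fps_const_neg)
  finally show ?thesis .
qed

lemma boole_fps_power_deriv:
  fixes lam :: "'a::field_char_0"
  defines "F \<equiv> boole_fps lam"
  shows "(1 + fps_X) * fps_deriv (F ^ Suc i) =
    fps_const (lam * of_nat (Suc i)) * (F ^ (i + 2) - F ^ (i + 1))"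
proof -
  have "(1 + fps_X) * fps_deriv (F ^ Suc i) = of_nat (Suc i) * F ^ i * ((1 + fps_X) * fps_deriv F)"
    by (simp only: fps_deriv_power' diff_Suc_1 mult_ac)
  also have "\<dots> = fps_const (lam * of_nat (Suc i)) * (F ^ (i + 2) - F ^ (i + 1))"
    unfolding F_def boole_fps_riccati unfolding F_def[symmetric]
    by (simp add: fps_of_nat[symmetric] algebra_simps power2_eq_square del: of_nat_Suc)
  finally show ?thesis .
qed

text \<open>The polynomial \<Sum>_{i=1..N+1} a_{i-1}(N;\<lambda>) F^i of the paper, indexed here from 0.\<close>
definition boole_deriv_poly :: "'a::field_char_0 \<Rightarrow> nat \<Rightarrow> 'a fps" where
  "boole_deriv_poly lam N = (\<Sum>i\<le>N. fps_const (acoef i N lam) * boole_fps lam ^ Suc i)"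

lemma boole_deriv_poly_deriv:
  fixes lam :: "'a::field_char_0"
  defines "F \<equiv> boole_fps lam"
  shows "(1 + fps_X) * fps_deriv (boole_deriv_poly lam N) =
    (\<Sum>i\<le>N. fps_const (lam * of_nat (Suc i) * acoef i N lam) * (F ^ (i + 2) - F ^ (i + 1)))"
  unfolding boole_deriv_poly_def fps_deriv_sum sum_distrib_left F_def[symmetric]
proof (rule sum.cong[OF refl])
  fix i
  have "(1 + fps_X) * fps_deriv (fps_const (acoef i N lam) * F ^ Suc i) =
      fps_const (acoef i N lam) * ((1 + fps_X) * fps_deriv (F ^ Suc i))"
    by (simp only: fps_deriv_mult_const_left mult.left_commute)
  also have "\<dots> = fps_const (lam * of_nat (Suc i) * acoef i N lam) * (F ^ (i + 2) - F ^ (i + 1))"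
    unfolding F_def boole_fps_power_deriv by (simp add: mult_ac del: power_Suc)
  finally show "(1 + fps_X) * fps_deriv (fps_const (acoef i N lam) * F ^ Suc i) =
      fps_const (lam * of_nat (Suc i) * acoef i N lam) * (F ^ (i + 2) - F ^ (i + 1))" .
qed

lemma boole_deriv_poly_Suc:
  fixes lam :: "'a::field_char_0"
  shows "boole_deriv_poly lam (Suc N) =
    of_nat N * boole_deriv_poly lam N - (1 + fps_X) * fps_deriv (boole_deriv_poly lam N)"
proof -
  define F where "F = boole_fps lam"
  define a where "a i = acoef i N lam" for i
  have lower: "(\<Sum>i\<le>Suc N. fps_const (- (of_nat i * lam) * acoef (i - 1) N lam) * F ^ Suc i) =
      (\<Sum>i\<le>N. fps_const (- (of_nat (Suc i) * lam) * a i) * F ^ (i + 2))"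
    by (subst sum.atMost_Suc_shift) (simp add: a_def)
  have upper: "(\<Sum>i\<le>Suc N. fps_const ((of_nat N + of_nat (i + 1) * lam) * a i) * F ^ Suc i) =
      (\<Sum>i\<le>N. fps_const ((of_nat N + of_nat (i + 1) * lam) * a i) * F ^ (i + 1))"
    by (simp add: a_def acoef_eq_0)
  have "boole_deriv_poly lam (Suc N) =
      (\<Sum>i\<le>Suc N. fps_const (- (of_nat i * lam) * acoef (i - 1) N lam) * F ^ Suc i)
    + (\<Sum>i\<le>Suc N. fps_const ((of_nat N + of_nat (i + 1) * lam) * a i) * F ^ Suc i)"
    unfolding sum.distrib[symmetric] boole_deriv_poly_def F_def a_def
    by (intro sum.cong refl)
       (simp only: acoef_Suc fps_const_add[symmetric] distrib_right[of "fps_const _"])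
  also have "\<dots> =
      (\<Sum>i\<le>N. fps_const (- (of_nat (Suc i) * lam) * a i) * F ^ (i + 2))
    + (\<Sum>i\<le>N. fps_const ((of_nat N + of_nat (i + 1) * lam) * a i) * F ^ (i + 1))"
    unfolding lower upper ..
  also have "\<dots> = (\<Sum>i\<le>N. fps_const (of_nat N) * (fps_const (a i) * F ^ Suc i)
      - fps_const (lam * of_nat (Suc i) * a i) * (F ^ (i + 2) - F ^ (i + 1)))"
    unfolding sum.distrib[symmetric]
    by (intro sum.cong refl)
       (simp add: fps_const_mult[symmetric] fps_const_add[symmetric]
          fps_const_neg[symmetric] algebra_simps
        del: of_nat_Suc fps_const_mult fps_const_add fps_const_neg)
  also have "\<dots> =
      of_nat N * boole_deriv_poly lam N - (1 + fps_X) * fps_deriv (boole_deriv_poly lam N)"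
    unfolding boole_deriv_poly_deriv
    by (simp add: boole_deriv_poly_def F_def a_def sum_subtractf sum_distrib_left fps_of_nat)
  finally show ?thesis .
qed

lemma boole_fps_funpow_deriv:
  fixes lam :: "'a::field_char_0"
  assumes "lam \<noteq> 0"
  shows "(1 + fps_X) ^ N * (fps_deriv ^^ N) (boole_fps lam) =
    fps_const ((-1) ^ N * lam) * boole_deriv_poly lam N"
proof (induction N)
  case 0
  have "fps_const lam * fps_const (1 / lam) = (1 :: 'a fps)"
    using assms by simp
  then show ?case by (simp add: boole_deriv_poly_def mult.assoc[symmetric])
next
  case (Suc N)
  define P where "P = (1 + fps_X :: 'a fps) ^ N"
  define D where "D = (fps_deriv ^^ N) (boole_fps lam)"
  define c where "c = fps_const ((-1) ^ N * lam)"
  have IH: "P * D = c * boole_deriv_poly lam N"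
    using Suc.IH by (simp add: P_def D_def c_def)
  have "(1 + fps_X) ^ Suc N * (fps_deriv ^^ Suc N) (boole_fps lam)
      = (1 + fps_X) * (fps_deriv (P * D) - fps_deriv P * D)"
    by (simp add: P_def D_def fps_deriv_mult algebra_simps)
  also have "\<dots> =
      (1 + fps_X) * fps_deriv (c * boole_deriv_poly lam N) - ((1 + fps_X) * fps_deriv P) * D"
    by (simp only: IH right_diff_distrib mult.assoc)
  also have "\<dots> = c * ((1 + fps_X) * fps_deriv (boole_deriv_poly lam N)) - of_nat N * (P * D)"
    unfolding P_def fps_deriv_one_plus_X_power c_def fps_deriv_mult_const_left
    by (simp only: mult.assoc mult.left_commute)
  also have "\<dots> = - c * boole_deriv_poly lam (Suc N)"
    unfolding IH boole_deriv_poly_Suc by (simp add: algebra_simps)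
  also have "- c = fps_const ((-1) ^ Suc N * lam)"
    by (simp add: c_def)
  finally show ?case .
qed

lemma boole_fps_funpow_deriv_eq:
  fixes lam :: "'a::field_char_0"
  assumes "lam \<noteq> 0"
  shows "(fps_deriv ^^ N) (boole_fps lam) = fps_const ((-1) ^ N * lam) *
    (\<Sum>i\<le>N. fps_const (acoef i N lam) * (fps_binomial (- of_nat N) * boole_fps lam ^ Suc i))"
proof -
  have "(fps_deriv ^^ N) (boole_fps lam) =
      fps_binomial (- of_nat N) * ((1 + fps_X) ^ N * (fps_deriv ^^ N) (boole_fps lam))"
    by (simp add: fps_binomial_minus_of_nat inverse_mult_eq_1 mult.assoc[symmetric])
  also have "\<dots> = fps_const ((-1) ^ N * lam) *
      (\<Sum>i\<le>N. fps_const (acoef i N lam) * (fps_binomial (- of_nat N) * boole_fps lam ^ Suc i))"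
    unfolding boole_fps_funpow_deriv[OF assms] boole_deriv_poly_def sum_distrib_left
    by (simp add: mult_ac)
  finally show ?thesis .
qed

lemma sum_atLeast1_atMost_Suc_shift:
  "(\<Sum>i=1..N+1. g i) = (\<Sum>i\<le>N. g (Suc i) :: 'a::comm_monoid_add)"
  by (simp add: atMost_atLeast0 sum.shift_bounds_cl_Suc_ivl[symmetric])

theorem theorem3:
  fixes lam :: "'a::field_char_0"
  assumes "lam \<noteq> 0" and "N \<ge> 1"
  shows "boole (k + N) lam =
    (-1) ^ N * lam *
      (\<Sum>i=1..N+1. acoef (i - 1) N lam *
         (\<Sum>l=0..k. of_nat (k choose l) * (-1) ^ l *
            falling (of_nat N + of_nat l - 1) l * boole_high i (k - l) lam))"
proof -
  have "boole (k + N) lam = fact k * fps_nth ((fps_deriv ^^ N) (boole_fps lam)) k"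
    using fps_nth_funpow_deriv[of k N "boole_fps lam"] by (simp add: boole_def)
  also have "\<dots> = (-1) ^ N * lam * (\<Sum>i\<le>N. acoef i N lam *
      (fact k * fps_nth (fps_binomial (- of_nat N) * boole_fps lam ^ Suc i) k))"
    unfolding boole_fps_funpow_deriv_eq[OF assms(1)] fps_mult_left_const_nth fps_sum_nth
      sum_distrib_left
    by (simp add: mult_ac del: power_Suc)
  also have "\<dots> = (-1) ^ N * lam *
      (\<Sum>i\<le>N. acoef i N lam *
         (\<Sum>l=0..k. of_nat (k choose l) * (-1) ^ l *
            falling (of_nat N + of_nat l - 1) l * boole_high (Suc i) (k - l) lam))"
    unfolding fact_nth_binomial_minus_of_nat_mult boole_high_def ..
  finally show ?thesis
    unfolding sum_atLeast1_atMost_Suc_shift by simp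
qed

end
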